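(* Let $F_0,F_1$ be an affine pair of communicating SR-machines. If the protocol is deadlock-free, then it has the bounded channel property if and only if neither $F_0$ nor $F_1$ has a send cycle.
   Context: A pair of communicating SR-machines is a CFSM protocol with communication graph having nodes $\{0,1\}$ and two edges $\alpha$ (from $0$ to $1$) and $\beta$ (from $1$ to $0$), disjoint finite message alphabets $M_\alpha,M_\beta$, and two finite state machines $F_j=(K_j,\Sigma_j,T_j,h_j)$, $j=0,1$, with $\Sigma_0=\{-b:b\in M_\alpha\}\cup\{+b:b\in M_\beta\}$, $\Sigma_1=\{-b:b\in M_\beta\}\cup\{+b:b\in M_\alpha\}$, $K_j$ finite, $h_j\in K_j$ initial, $T_j\subseteq K_j\times\Sigma_j\times K_j$ (transitions written $p\xrightarrow{e}q$; $+b$ = receive, $-b$ = send; $p\xrightarrow{w}q$ for $w\in\Sigma_j^*$ means a directed path labelled $w$). A state is a send state if it has no outgoing $+b$ transition and a receive state if it has no outgoing $-b$ transition. $F_j$ is an SR-machine if every state is a send or a receive state, its transition diagram is strongly connected, and $p\xrightarrow{e}q_1$, $p\xrightarrow{e}q_2$ imply $q_1=q_2$. Global states are $((p_0,p_1),(x_\alpha,x_\beta))$; initially $((h_0,h_1),(\lambda,\lambda))$. A step is either a send (a machine performs $p\xrightarrow{-b}q$ and $b$ is appended to its output channel: $\alpha$ for $F_0$, $\beta$ for $F_1$) or a receive (a machine performs $p\xrightarrow{+b}q$ and $b$ is removed from the front of its input channel, $\beta$ for $F_0$, $\alpha$ for $F_1$, which must begin with $b$); the other machine is unchanged. Reachable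 means reachable from the initial global state. A global state is deadlocked if both components are receive states and both channels are empty; the protocol is deadlock-free if no deadlocked global state is reachable. It has the bounded channel property if $|x_\alpha|+|x_\beta|$ is bounded over all reachable global states. $\pi_\alpha(w)$ (resp. $\pi_\beta(w)$) is the string of symbols of $M_\alpha$ (resp. $M_\beta$) occurring in $w$, in order, signs removed; $\mathbf Z_j=\{(\pi_\alpha(w),\pi_\beta(w)): h_j\xrightarrow{w}h_j \text{ in } F_j\}$; the pair is affine if $\mathbf Z_0=\mathbf Z_1$. A send cycle of $F_j$ is a directed cycle in its transition diagram all of whose labels are of the form $-b$. *)

theory Defs
  imports Main
begin

datatype 'm act = Send 'm | Recv 'm

fun msg :: "'m act \<Rightarrow> 'm" where
  "msg (Send b) = b" | "msg (Recv b) = b"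

text \<open>A finite state machine (K, Sigma, T, h); Sigma is fixed by the role of the machine.\<close>
record ('s, 'm) fsm =
  states :: "'s set"
  trans  :: "('s \<times> 'm act \<times> 's) set"
  init   :: 's

inductive path :: "('s \<times> 'm act \<times> 's) set \<Rightarrow> 's \<Rightarrow> 'm act list \<Rightarrow> 's \<Rightarrow> bool"
  for T where
  path_nil:  "path T p [] p"
| path_cons: "(p, e, r) \<in> T \<Longrightarrow> path T r w q \<Longrightarrow> path T p (e # w) q"

definition send_state :: "('s, 'm) fsm \<Rightarrow> 's \<Rightarrow> bool" where
  "send_state F p \<longleftrightarrow> (\<nexists>b q. (p, Recv b, q) \<in> trans F)"

definition receive_state :: "('s, 'm) fsm \<Rightarrow> 's \<Rightarrow> bool" where
  "receive_state F p \<longleftrightarrow> (\<nexists>b q. (p, Send b, q) \<in> trans F)"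

definition alphabet :: "'m set \<Rightarrow> 'm set \<Rightarrow> 'm act set" where
  "alphabet Out In = Send ` Out \<union> Recv ` In"

definition is_fsm :: "'m set \<Rightarrow> 'm set \<Rightarrow> ('s, 'm) fsm \<Rightarrow> bool" where
  "is_fsm Out In F \<longleftrightarrow> finite (states F) \<and> init F \<in> states F \<and>
     trans F \<subseteq> states F \<times> alphabet Out In \<times> states F"

definition sr_machine :: "'m set \<Rightarrow> 'm set \<Rightarrow> ('s, 'm) fsm \<Rightarrow> bool" where
  "sr_machine Out In F \<longleftrightarrow> is_fsm Out In F \<and>
     (\<forall>p \<in> states F. send_state F p \<or> receive_state F p) \<and>
     (\<forall>p \<in> states F. \<forall>q \<in> states F. \<exists>w. path (trans F) p w q) \<and>
     (\<forall>p e q1 q2. (p, e, q1) \<in> trans F \<longrightarrow> (p, e, q2) \<in> trans F \<longrightarrow> q1 = q2)"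

definition sr_pair :: "'m set \<Rightarrow> 'm set \<Rightarrow> ('s0, 'm) fsm \<Rightarrow> ('s1, 'm) fsm \<Rightarrow> bool" where
  "sr_pair Ma Mb F0 F1 \<longleftrightarrow> finite Ma \<and> finite Mb \<and> Ma \<inter> Mb = {} \<and>
     sr_machine Ma Mb F0 \<and> sr_machine Mb Ma F1"

type_synonym ('s0, 's1, 'm) gstate = "('s0 \<times> 's1) \<times> ('m list \<times> 'm list)"

text \<open>One step of the protocol; channel alpha (first list) goes from F0 to F1,
  channel beta (second list) from F1 to F0.\<close>
inductive gstep :: "('s0, 'm) fsm \<Rightarrow> ('s1, 'm) fsm \<Rightarrow>
    ('s0, 's1, 'm) gstate \<Rightarrow> ('s0, 's1, 'm) gstate \<Rightarrow> bool"
  for F0 F1 where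
  send0: "(p0, Send b, q0) \<in> trans F0 \<Longrightarrow>
     gstep F0 F1 ((p0, p1), (xa, xb)) ((q0, p1), (xa @ [b], xb))"
| recv0: "(p0, Recv b, q0) \<in> trans F0 \<Longrightarrow>
     gstep F0 F1 ((p0, p1), (xa, b # xb)) ((q0, p1), (xa, xb))"
| send1: "(p1, Send b, q1) \<in> trans F1 \<Longrightarrow>
     gstep F0 F1 ((p0, p1), (xa, xb)) ((p0, q1), (xa, xb @ [b]))"
| recv1: "(p1, Recv b, q1) \<in> trans F1 \<Longrightarrow>
     gstep F0 F1 ((p0, p1), (b # xa, xb)) ((p0, q1), (xa, xb))"

definition initial_gstate :: "('s0, 'm) fsm \<Rightarrow> ('s1, 'm) fsm \<Rightarrow> ('s0, 's1, 'm) gstate" where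
  "initial_gstate F0 F1 = ((init F0, init F1), ([], []))"

definition reachable :: "('s0, 'm) fsm \<Rightarrow> ('s1, 'm) fsm \<Rightarrow> ('s0, 's1, 'm) gstate \<Rightarrow> bool" where
  "reachable F0 F1 g \<longleftrightarrow> (gstep F0 F1)\<^sup>*\<^sup>* (initial_gstate F0 F1) g"

definition deadlocked :: "('s0, 'm) fsm \<Rightarrow> ('s1, 'm) fsm \<Rightarrow> ('s0, 's1, 'm) gstate \<Rightarrow> bool" where
  "deadlocked F0 F1 g \<longleftrightarrow> (case g of ((p0, p1), (xa, xb)) \<Rightarrow>
     receive_state F0 p0 \<and> receive_state F1 p1 \<and> xa = [] \<and> xb = [])"

definition deadlock_free :: "('s0, 'm) fsm \<Rightarrow> ('s1, 'm) fsm \<Rightarrow> bool" where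
  "deadlock_free F0 F1 \<longleftrightarrow> (\<forall>g. reachable F0 F1 g \<longrightarrow> \<not> deadlocked F0 F1 g)"

definition bounded_channel :: "('s0, 'm) fsm \<Rightarrow> ('s1, 'm) fsm \<Rightarrow> bool" where
  "bounded_channel F0 F1 \<longleftrightarrow> (\<exists>B::nat. \<forall>p xa xb. reachable F0 F1 (p, (xa, xb)) \<longrightarrow>
     length xa + length xb \<le> B)"

definition proj :: "'m set \<Rightarrow> 'm act list \<Rightarrow> 'm list" where
  "proj M w = map msg (filter (\<lambda>e. msg e \<in> M) w)"

definition Zset :: "'m set \<Rightarrow> 'm set \<Rightarrow> ('s, 'm) fsm \<Rightarrow> ('m list \<times> 'm list) set" where
  "Zset Ma Mb F = {(proj Ma w, proj Mb w) | w. path (trans F) (init F) w (init F)}"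

definition affine :: "'m set \<Rightarrow> 'm set \<Rightarrow> ('s0, 'm) fsm \<Rightarrow> ('s1, 'm) fsm \<Rightarrow> bool" where
  "affine Ma Mb F0 F1 \<longleftrightarrow> Zset Ma Mb F0 = Zset Ma Mb F1"

definition has_send_cycle :: "('s, 'm) fsm \<Rightarrow> bool" where
  "has_send_cycle F \<longleftrightarrow> (\<exists>p w. w \<noteq> [] \<and> path (trans F) p w p \<and>
     (\<forall>e \<in> set w. \<exists>b. e = Send b))"

end

theory Submission
  imports Defs "HOL-Library.Sublist"
begin

(*
  A send cycle can be pumped once it is visited by a reachable global state.  Under deadlock
  freedom and affinity every local state of F0 is: it lies on a cycle of F0 through the initial
  state, affinity provides a cycle of F1 with the same message projections, and the two can be run
  against each other from the initial global state, since getting stuck would be a deadlock.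

  Conversely, if F0 has no send cycle, then F1 has no receive cycle, for pumping one would give
  F0 a cycle sending arbitrarily often between boundedly many receptions.  So F1 reads only
  boundedly many messages per message it sends.  Completing the history of F0 to a cycle and
  comparing F1's history with the affine counterpart of that cycle then bounds the messages F0
  has sent and F1 has not yet read.  Exchanging the roles of the machines handles the other
  channel and the other machine.
*)

lemma path_Nil_iff [simp]: "path T p [] q \<longleftrightarrow> p = q"
  by (auto elim: path.cases intro: path.intros)

lemma path_Cons_iff [simp]: "path T p (e # w) q \<longleftrightarrow> (\<exists>r. (p, e, r) \<in> T \<and> path T r w q)"
  by (auto elim: path.cases intro: path.intros)

lemma path_append_iff: "path T p (u @ v) q \<longleftrightarrow> (\<exists>r. path T p u r \<and> path T r v q)"
  by (induction u arbitrary: p) auto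

lemma path_snoc: "path T p u r \<Longrightarrow> (r, e, q) \<in> T \<Longrightarrow> path T p (u @ [e]) q"
  by (auto simp: path_append_iff)

lemma path_power: "path T p w p \<Longrightarrow> path T p (concat (replicate n w)) p"
  by (induction n) (auto simp: path_append_iff)

lemma is_fsm_trans:
  "is_fsm Out In F \<Longrightarrow> (p, e, q) \<in> trans F \<Longrightarrow> p \<in> states F \<and> e \<in> alphabet Out In \<and> q \<in> states F"
  by (auto simp: is_fsm_def)

lemma path_target_in_states:
  "path (trans F) p w q \<Longrightarrow> is_fsm Out In F \<Longrightarrow> p \<in> states F \<Longrightarrow> q \<in> states F"
  by (induction rule: path.induct) (auto dest: is_fsm_trans)

lemma path_source_in_states:
  "path (trans F) p w q \<Longrightarrow> is_fsm Out In F \<Longrightarrow> w \<noteq> [] \<Longrightarrow> p \<in> states F"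
  by (induction rule: path.induct) (auto dest: is_fsm_trans)

lemma path_labels_in_alphabet:
  "path (trans F) p w q \<Longrightarrow> is_fsm Out In F \<Longrightarrow> set w \<subseteq> alphabet Out In"
  by (induction rule: path.induct) (auto dest: is_fsm_trans)

lemma fsm_Send_in_Out: "is_fsm Out In F \<Longrightarrow> (p, Send b, q) \<in> trans F \<Longrightarrow> b \<in> Out"
  by (auto simp: alphabet_def dest: is_fsm_trans)

lemma fsm_Recv_in_In: "is_fsm Out In F \<Longrightarrow> (p, Recv b, q) \<in> trans F \<Longrightarrow> b \<in> In"
  by (auto simp: alphabet_def dest: is_fsm_trans)

fun is_send :: "'m act \<Rightarrow> bool" where
  "is_send (Send b) = True"
| "is_send (Recv b) = False"

lemma is_send_iff: "is_send e \<longleftrightarrow> (\<exists>b. e = Send b)"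
  by (cases e) auto

definition has_cycle_within :: "('m act \<Rightarrow> bool) \<Rightarrow> ('s, 'm) fsm \<Rightarrow> bool" where
  "has_cycle_within P F \<longleftrightarrow> (\<exists>p w. w \<noteq> [] \<and> path (trans F) p w p \<and> (\<forall>e \<in> set w. P e))"

lemma has_send_cycle_iff: "has_send_cycle F \<longleftrightarrow> has_cycle_within is_send F"
  by (simp add: has_send_cycle_def has_cycle_within_def is_send_iff)

lemma proj_Nil [simp]: "proj M [] = []"
  by (simp add: proj_def)

lemma proj_Cons [simp]: "proj M (e # w) = (if msg e \<in> M then msg e # proj M w else proj M w)"
  by (simp add: proj_def)

lemma proj_append [simp]: "proj M (u @ v) = proj M u @ proj M v"
  by (simp add: proj_def)

lemma length_proj_le: "length (proj M w) \<le> length w"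
  by (simp add: proj_def)

lemma proj_power: "proj M (concat (replicate n w)) = concat (replicate n (proj M w))"
  by (induction n) auto

lemma proj_out_eq_sends:
  "set w \<subseteq> alphabet Out In \<Longrightarrow> Out \<inter> In = {} \<Longrightarrow> proj Out w = map msg (filter is_send w)"
  by (induction w) (auto simp: alphabet_def)

lemma proj_in_eq_receives:
  "set w \<subseteq> alphabet Out In \<Longrightarrow> Out \<inter> In = {} \<Longrightarrow> proj In w = map msg (filter (\<lambda>e. \<not> is_send e) w)"
  by (induction w) (auto simp: alphabet_def)

section \<open>Counting labels along acyclic paths\<close>

lemma acyclic_path_distinct_states:
  assumes "path (trans F) p w q" "is_fsm Out In F" "p \<in> states F" "\<forall>e \<in> set w. P e"
    "\<not> has_cycle_within P F"
  shows "\<exists>ss. distinct ss \<and> length ss = Suc (length w) \<and> set ss \<subseteq> states F \<and>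
     (\<forall>s \<in> set ss. \<exists>u. path (trans F) p u s \<and> (\<forall>e \<in> set u. P e))"
  using assms
proof (induction rule: path.induct)
  case (path_nil p)
  then show ?case by (intro exI[of _ "[p]"]) (auto intro!: exI[of _ "[]"])
next
  case (path_cons p e r w q)
  have "r \<in> states F" using path_cons.hyps(1) path_cons.prems(1) by (auto dest: is_fsm_trans)
  then obtain ss where ss: "distinct ss" "length ss = Suc (length w)" "set ss \<subseteq> states F"
     "\<forall>s \<in> set ss. \<exists>u. path (trans F) r u s \<and> (\<forall>e \<in> set u. P e)"
    using path_cons.IH path_cons.prems by auto
  have "p \<notin> set ss"
  proof
    assume "p \<in> set ss"
    then obtain u where "path (trans F) r u p" "\<forall>e \<in> set u. P e" using ss(4) by blast
    then have "path (trans F) p (e # u) p" "\<forall>x \<in> set (e # u). P x"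
      using path_cons.hyps(1) path_cons.prems(3) by auto
    then show False using path_cons.prems(4) unfolding has_cycle_within_def by blast
  qed
  moreover have "\<forall>s \<in> set (p # ss). \<exists>u. path (trans F) p u s \<and> (\<forall>e \<in> set u. P e)"
  proof
    fix s assume "s \<in> set (p # ss)"
    then consider "s = p" | u where "path (trans F) r u s" "\<forall>e \<in> set u. P e"
      using ss(4) by auto
    then show "\<exists>u. path (trans F) p u s \<and> (\<forall>e \<in> set u. P e)"
    proof cases
      case 1
      then show ?thesis by (intro exI[of _ "[]"]) auto
    next
      case (2 u)
      then show ?thesis using path_cons.hyps(1) path_cons.prems(3)
        by (intro exI[of _ "e # u"]) auto
    qed
  qed
  ultimately show ?case using ss path_cons.prems(2) by (intro exI[of _ "p # ss"]) auto
qed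

lemma acyclic_path_length_less_card:
  assumes "path (trans F) p w q" "is_fsm Out In F" "p \<in> states F" "\<forall>e \<in> set w. P e"
    "\<not> has_cycle_within P F"
  shows "length w < card (states F)"
proof -
  obtain ss where ss: "distinct ss" "length ss = Suc (length w)" "set ss \<subseteq> states F"
    using acyclic_path_distinct_states[OF assms] by blast
  have "finite (states F)" using assms(2) by (simp add: is_fsm_def)
  then have "card (set ss) \<le> card (states F)" using ss(3) by (rule card_mono)
  then show ?thesis using distinct_card[OF ss(1)] ss(2) by simp
qed

text \<open>Without cycles labelled in P, every maximal block of P-labels is shorter than the number
  of states, and consecutive blocks are separated by a label outside P.\<close>
lemma acyclic_path_count_bound:
  assumes "is_fsm Out In F" "\<not> has_cycle_within P F"
  shows "path (trans F) p w q \<Longrightarrow> p \<in> states F \<Longrightarrow>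
    length (filter P w) \<le> card (states F) * (length (filter (\<lambda>e. \<not> P e) w) + 1)"
proof (induction "length w" arbitrary: p w rule: less_induct)
  case less
  define u where "u = takeWhile P w"
  define v where "v = dropWhile P w"
  have w: "w = u @ v" by (simp add: u_def v_def)
  obtain r where pu: "path (trans F) p u r" and pv: "path (trans F) r v q"
    using less.prems(1) w path_append_iff by metis
  have uP: "\<forall>e \<in> set u. P e" unfolding u_def by (meson set_takeWhileD)
  have "length u < card (states F)"
    by (rule acyclic_path_length_less_card[OF pu assms(1) less.prems(2) uP assms(2)])
  moreover have "filter P u = u" "filter (\<lambda>e. \<not> P e) u = []"
    using uP by (simp_all add: filter_id_conv filter_empty_conv)
  moreover have "length (filter P v) \<le> card (states F) * length (filter (\<lambda>e. \<not> P e) v)"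
  proof (cases v)
    case (Cons e v')
    have "\<not> P e" using Cons v_def hd_dropWhile[of P w] by auto
    obtain r' where "(r, e, r') \<in> trans F" "path (trans F) r' v' q" using pv Cons by auto
    moreover have "length v' < length w" using w Cons by simp
    ultimately have "length (filter P v') \<le> card (states F) * (length (filter (\<lambda>e. \<not> P e) v') + 1)"
      using less.hyps assms(1) by (blast dest: is_fsm_trans)
    then show ?thesis using Cons \<open>\<not> P e\<close> by simp
  qed simp
  ultimately show ?case using w by simp
qed

lemma no_send_cycle_count_bound:
  assumes "is_fsm Out In F" "Out \<inter> In = {}" "\<not> has_send_cycle F"
    and "path (trans F) p w q" "p \<in> states F"
  shows "length (proj Out w) \<le> card (states F) * (length (proj In w) + 1)"
proof -
  have "set w \<subseteq> alphabet Out In" using path_labels_in_alphabet[OF assms(4,1)] .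
  then show ?thesis
    using acyclic_path_count_bound[OF assms(1) _ assms(4,5), of is_send] assms(2,3)
    by (simp add: proj_out_eq_sends proj_in_eq_receives has_send_cycle_iff)
qed

lemma no_receive_cycle_count_bound:
  assumes "is_fsm Out In F" "Out \<inter> In = {}" "\<not> has_cycle_within (\<lambda>e. \<not> is_send e) F"
    and "path (trans F) p w q" "p \<in> states F"
  shows "length (proj In w) \<le> card (states F) * (length (proj Out w) + 1)"
proof -
  have "set w \<subseteq> alphabet Out In" using path_labels_in_alphabet[OF assms(4,1)] .
  then show ?thesis
    using acyclic_path_count_bound[OF assms(1,3,4,5)] assms(2)
    by (simp add: proj_out_eq_sends proj_in_eq_receives)
qed

lemma bounded_paths_to:
  assumes "finite K" "\<forall>p \<in> K. \<exists>w. path T p w q"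
  obtains N where "\<forall>p \<in> K. \<exists>w. path T p w q \<and> length w \<le> N"
proof -
  obtain f where "\<forall>p \<in> K. path T p (f p) q" using assms(2) by metis
  then have "\<forall>p \<in> K. path T p (f p) q \<and> length (f p) \<le> Max ((\<lambda>p. length (f p)) ` K)"
    using assms(1) by simp
  then show ?thesis using that by blast
qed

lemma sr_machine_is_fsm: "sr_machine Out In F \<Longrightarrow> is_fsm Out In F"
  by (simp add: sr_machine_def)

lemma sr_machine_step_deterministic:
  "sr_machine Out In F \<Longrightarrow> (p, e, q) \<in> trans F \<Longrightarrow> (p, e, q') \<in> trans F \<Longrightarrow> q = q'"
  unfolding sr_machine_def by blast

lemma sr_machine_path_deterministic:
  "path (trans F) p w q \<Longrightarrow> path (trans F) p w q' \<Longrightarrow> sr_machine Out In F \<Longrightarrow> q = q'"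
proof (induction arbitrary: q' rule: path.induct)
  case (path_cons p e r w q)
  then obtain r' where "(p, e, r') \<in> trans F" "path (trans F) r' w q'" by auto
  moreover have "r' = r" using sr_machine_step_deterministic path_cons calculation(1) by metis
  ultimately show ?case using path_cons.IH path_cons.prems(2) by blast
qed simp

lemma sr_machine_same_kind:
  assumes "sr_machine Out In F" "(p, e, q) \<in> trans F" "(p, e', q') \<in> trans F"
  shows "is_send e \<longleftrightarrow> is_send e'"
proof -
  have "p \<in> states F" using assms by (auto dest: sr_machine_is_fsm is_fsm_trans)
  then have "send_state F p \<or> receive_state F p" using assms(1) by (simp add: sr_machine_def)
  then show ?thesis using assms(2,3)
    by (cases e; cases e') (auto simp: send_state_def receive_state_def)
qed

lemma receive_state_if_not_send:
  "sr_machine Out In F \<Longrightarrow> (p, e, q) \<in> trans F \<Longrightarrow> \<not> is_send e \<Longrightarrow> receive_state F p"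
  by (metis is_send.simps(1) receive_state_def sr_machine_same_kind)

lemma prefix_diverging_length_le:
  "prefix r (xs @ a # ys) \<Longrightarrow> prefix r (xs @ b # zs) \<Longrightarrow> a \<noteq> b \<Longrightarrow> length r \<le> length xs"
  by (metis leI nth_append_left nth_append_length prefixE)

text \<open>The label words u and z agree up to a point where, by determinism, they are in the same
  state; there they either send different messages, which cuts R off, or receive different
  messages, which the prefix condition forbids.\<close>
lemma sr_machine_common_output_within_input:
  assumes sr: "sr_machine Out In F" and disj: "Out \<inter> In = {}"
    and u: "path (trans F) h u p" and z: "path (trans F) h z q"
    and pin: "prefix (proj In u) (proj In z)"
    and pu: "prefix R (proj Out u)" and pz: "prefix R (proj Out z)"
  shows "\<exists>c d. z = c @ d \<and> length (proj In c) \<le> length (proj In u) \<and> length R \<le> length (proj Out c)"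
proof (cases rule: prefix_cases[of u z])
  case 1
  then obtain d where "z = u @ d" by (auto elim: prefixE)
  then show ?thesis using pu by (intro exI[of _ u] exI[of _ d]) (auto dest: prefix_length_le)
next
  case 2
  then obtain d where "u = z @ d" by (auto elim: strict_prefixE prefixE)
  then show ?thesis using pz by (intro exI[of _ z] exI[of _ "[]"]) (auto dest: prefix_length_le)
next
  case 3
  then obtain c e u' e' z' where ne: "e \<noteq> e'" and uc: "u = c @ e # u'" and zc: "z = c @ e' # z'"
    using parallel_decomp by blast
  obtain r r' t t' where "path (trans F) h c r" "(r, e, t) \<in> trans F"
    "path (trans F) h c r'" "(r', e', t') \<in> trans F"
    using u z uc zc by (auto simp: path_append_iff)
  then have e: "(r, e, t) \<in> trans F" and e': "(r, e', t') \<in> trans F"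
    using sr_machine_path_deterministic[OF _ _ sr] by blast+
  have fsm: "is_fsm Out In F" using sr by (rule sr_machine_is_fsm)
  have "length R \<le> length (proj Out c)"
  proof (cases e)
    case (Send a)
    then obtain a' where e'_eq: "e' = Send a'" and "a \<noteq> a'"
      using ne sr_machine_same_kind[OF sr e e'] by (cases e') auto
    moreover have "a \<in> Out" "a' \<in> Out" using Send e'_eq e e' fsm by (auto dest: fsm_Send_in_Out)
    ultimately show ?thesis using Send pu pz uc zc by (auto intro: prefix_diverging_length_le)
  next
    case (Recv a)
    then obtain a' where e'_eq: "e' = Recv a'" and "a \<noteq> a'"
      using ne sr_machine_same_kind[OF sr e e'] by (cases e') auto
    moreover have "a \<in> In" "a' \<in> In" using Recv e'_eq e e' fsm by (auto dest: fsm_Recv_in_In)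
    ultimately have "length (proj In u) \<le> length (proj In c)"
      using Recv pin uc zc by (auto intro: prefix_diverging_length_le)
    then show ?thesis using \<open>a \<in> In\<close> Recv uc by simp
  qed
  then show ?thesis using zc uc by (intro exI[of _ c] exI[of _ "e' # z'"]) auto
qed

fun gswap :: "('s0, 's1, 'm) gstate \<Rightarrow> ('s1, 's0, 'm) gstate" where
  "gswap ((p0, p1), (xa, xb)) = ((p1, p0), (xb, xa))"

lemma gswap_gswap [simp]: "gswap (gswap g) = g"
  by (cases g) auto

lemma gstep_gswap: "gstep F0 F1 g g' \<Longrightarrow> gstep F1 F0 (gswap g) (gswap g')"
  by (induction rule: gstep.induct) (auto intro: gstep.intros)

lemma reachable_gswap_imp: "reachable F0 F1 g \<Longrightarrow> reachable F1 F0 (gswap g)"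
  unfolding reachable_def
proof (induction rule: rtranclp_induct)
  case base
  then show ?case by (simp add: initial_gstate_def)
next
  case (step g g')
  then show ?case by (meson gstep_gswap rtranclp.rtrancl_into_rtrancl)
qed

lemma reachable_gswap: "reachable F1 F0 (gswap g) \<longleftrightarrow> reachable F0 F1 g"
  by (metis gswap_gswap reachable_gswap_imp)

lemma reachable_swap: "reachable F1 F0 ((p1, p0), (xb, xa)) \<longleftrightarrow> reachable F0 F1 ((p0, p1), (xa, xb))"
  using reachable_gswap[of F1 F0 "((p0, p1), (xa, xb))"] by (simp only: gswap.simps)

lemma deadlock_free_swap: "deadlock_free F1 F0 \<longleftrightarrow> deadlock_free F0 F1"
proof -
  have "deadlocked F1 F0 (gswap g) \<longleftrightarrow> deadlocked F0 F1 g" for g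
    by (cases g) (auto simp: deadlocked_def)
  then show ?thesis unfolding deadlock_free_def by (metis gswap_gswap reachable_gswap)
qed

lemma bounded_channel_swap_imp: "bounded_channel F0 F1 \<Longrightarrow> bounded_channel F1 F0"
  unfolding bounded_channel_def
proof (elim exE, intro exI allI impI)
  fix B p xb xa
  assume B: "\<forall>p xa xb. reachable F0 F1 (p, (xa, xb)) \<longrightarrow> length xa + length xb \<le> B"
    and "reachable F1 F0 (p, (xb, xa))"
  then have "reachable F0 F1 ((snd p, fst p), (xa, xb))"
    using reachable_swap[of F0 F1 "snd p" "fst p" xa xb] by simp
  then show "length xb + length xa \<le> B" using B by fastforce
qed

lemma sr_pair_swap: "sr_pair Mb Ma F1 F0 \<longleftrightarrow> sr_pair Ma Mb F0 F1"
  by (auto simp: sr_pair_def)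

lemma sr_pair_fsms:
  "sr_pair Ma Mb F0 F1 \<Longrightarrow> is_fsm Ma Mb F0 \<and> is_fsm Mb Ma F1 \<and> Ma \<inter> Mb = {}"
  by (simp add: sr_pair_def sr_machine_def)

lemma Zset_swap: "Zset Mb Ma F = prod.swap ` Zset Ma Mb F"
  by (auto simp: Zset_def)

lemma affine_swap: "affine Mb Ma F1 F0 \<longleftrightarrow> affine Ma Mb F0 F1"
  by (metis Zset_swap affine_def)

lemma affine_commute: "affine Ma Mb F1 F0 \<longleftrightarrow> affine Ma Mb F0 F1"
  by (auto simp: affine_def)

lemma affine_loop:
  assumes "affine Ma Mb F0 F1" "path (trans F0) (init F0) w (init F0)"
  obtains z where "path (trans F1) (init F1) z (init F1)" "proj Ma z = proj Ma w" "proj Mb z = proj Mb w"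
proof -
  have "(proj Ma w, proj Mb w) \<in> Zset Ma Mb F1"
    using assms unfolding affine_def Zset_def by blast
  then show ?thesis using that unfolding Zset_def by auto
qed

lemma reachable_run:
  "reachable F0 F1 g \<Longrightarrow> (gstep F0 F1)\<^sup>*\<^sup>* g g' \<Longrightarrow> reachable F0 F1 g'"
  unfolding reachable_def by (rule rtranclp_trans)

lemma reachable_histories:
  assumes "sr_pair Ma Mb F0 F1" "reachable F0 F1 ((p0, p1), (xa, xb))"
  shows "\<exists>u0 u1. path (trans F0) (init F0) u0 p0 \<and> path (trans F1) (init F1) u1 p1 \<and>
    proj Ma u0 = proj Ma u1 @ xa \<and> proj Mb u1 = proj Mb u0 @ xb"
  using assms(2) unfolding reachable_def
proof (induction "((p0, p1), (xa, xb))" arbitrary: p0 p1 xa xb rule: rtranclp_induct)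
  case base
  then show ?case by (auto simp: initial_gstate_def intro!: exI[of _ "[]"])
next
  case (step g)
  have fsm: "is_fsm Ma Mb F0" "is_fsm Mb Ma F1" and disj: "Ma \<inter> Mb = {}"
    using sr_pair_fsms[OF assms(1)] by auto
  from step.hyps(2) show ?case
  proof cases
    case (send0 p0' b)
    then show ?thesis using step.hyps(3) fsm_Send_in_Out[OF fsm(1)] disj
      by (fastforce intro: path_snoc)
  next
    case (recv0 p0' b)
    then show ?thesis using step.hyps(3) fsm_Recv_in_In[OF fsm(1)] disj
      by (fastforce intro: path_snoc)
  next
    case (send1 p1' b)
    then show ?thesis using step.hyps(3) fsm_Send_in_Out[OF fsm(2)] disj
      by (fastforce intro: path_snoc)
  next
    case (recv1 p1' b)
    then show ?thesis using step.hyps(3) fsm_Recv_in_In[OF fsm(2)] disj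
      by (fastforce intro: path_snoc)
  qed
qed

text \<open>Run from channel contents xa and xb, the local runs w0 of F0 and w1 of F1 read exactly
  what is in the channels or gets sent meanwhile.\<close>
definition drains :: "'m set \<Rightarrow> 'm set \<Rightarrow> 'm list \<Rightarrow> 'm list \<Rightarrow> 'm act list \<Rightarrow> 'm act list \<Rightarrow> bool" where
  "drains Ma Mb xa xb w0 w1 \<longleftrightarrow> xa @ proj Ma w0 = proj Ma w1 \<and> xb @ proj Mb w1 = proj Mb w0"

lemma drains_swap: "drains Mb Ma xb xa w1 w0 \<longleftrightarrow> drains Ma Mb xa xb w0 w1"
  by (auto simp: drains_def)

lemma drains_step0:
  assumes fsm: "is_fsm Ma Mb F0" and disj: "Ma \<inter> Mb = {}"
    and e: "(p0, e, p0') \<in> trans F0" and dr: "drains Ma Mb xa xb (e # w0) w1"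
    and ready: "is_send e \<or> xb \<noteq> []"
  shows "\<exists>xa' xb'. gstep F0 F1 ((p0, p1), (xa, xb)) ((p0', p1), (xa', xb')) \<and>
    drains Ma Mb xa' xb' w0 w1"
proof (cases e)
  case (Send a)
  then have "a \<in> Ma" "a \<notin> Mb" using e fsm disj by (auto dest: fsm_Send_in_Out)
  then show ?thesis using gstep.send0[OF e[unfolded Send]] dr Send
    by (intro exI[of _ "xa @ [a]"] exI[of _ xb]) (auto simp: drains_def)
next
  case (Recv b)
  then have "b \<in> Mb" "b \<notin> Ma" using e fsm disj by (auto dest: fsm_Recv_in_In)
  moreover obtain xb' where "xb = b # xb'"
    using ready dr Recv calculation by (cases xb) (auto simp: drains_def)
  ultimately show ?thesis using gstep.recv0[OF e[unfolded Recv]] dr Recv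
    by (intro exI[of _ xa] exI[of _ xb']) (auto simp: drains_def)
qed

lemma drains_step1:
  assumes fsm: "is_fsm Mb Ma F1" and disj: "Ma \<inter> Mb = {}"
    and e: "(p1, e, p1') \<in> trans F1" and dr: "drains Ma Mb xa xb w0 (e # w1)"
    and ready: "is_send e \<or> xa \<noteq> []"
  shows "\<exists>xa' xb'. gstep F0 F1 ((p0, p1), (xa, xb)) ((p0, p1'), (xa', xb')) \<and>
    drains Ma Mb xa' xb' w0 w1"
proof -
  have "Mb \<inter> Ma = {}" using disj by blast
  then obtain xb' xa' where "gstep F1 F0 ((p1, p0), (xb, xa)) ((p1', p0), (xb', xa'))"
    and "drains Mb Ma xb' xa' w1 w0"
    using drains_step0[OF fsm _ e drains_swap[THEN iffD2, OF dr] ready, of F0 p0] by blast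
  then have "gstep F0 F1 ((p0, p1), (xa, xb)) ((p0, p1'), (xa', xb'))"
    using gstep_gswap by fastforce
  then show ?thesis using drains_swap \<open>drains Mb Ma xb' xa' w1 w0\<close> by blast
qed

text \<open>If neither machine can perform its next event, both wait to receive on empty channels.\<close>
lemma deadlock_free_progress:
  assumes sp: "sr_pair Ma Mb F0 F1" and df: "deadlock_free F0 F1"
    and g: "reachable F0 F1 ((p0, p1), (xa, xb))"
    and w0: "(p0, e, p0') \<in> trans F0" and w1: "path (trans F1) p1 w1 q1"
    and dr: "drains Ma Mb xa xb (e # w0) w1"
  shows "(\<exists>xa' xb'. reachable F0 F1 ((p0', p1), (xa', xb')) \<and> drains Ma Mb xa' xb' w0 w1) \<or>
    (\<exists>e1 w1' p1' xa' xb'. w1 = e1 # w1' \<and> path (trans F1) p1' w1' q1 \<and>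
       reachable F0 F1 ((p0, p1'), (xa', xb')) \<and> drains Ma Mb xa' xb' (e # w0) w1')"
proof -
  have sr0: "sr_machine Ma Mb F0" and sr1: "sr_machine Mb Ma F1" and disj: "Ma \<inter> Mb = {}"
    using sp by (auto simp: sr_pair_def)
  have fsm0: "is_fsm Ma Mb F0" and fsm1: "is_fsm Mb Ma F1"
    using sr0 sr1 by (simp_all add: sr_machine_is_fsm)
  have step: "reachable F0 F1 g'" if "gstep F0 F1 ((p0, p1), (xa, xb)) g'" for g'
    using g that by (simp add: reachable_def)
  show ?thesis
  proof (cases "is_send e \<or> xb \<noteq> []")
    case True
    show ?thesis using drains_step0[OF fsm0 disj w0 dr True, of F1 p1] step by blast
  next
    case False
    then obtain b where b: "e = Recv b" "xb = []" by (cases e) auto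
    then have "b \<in> Mb" using w0 fsm0 by (auto dest: fsm_Recv_in_In)
    then obtain e1 w1' p1' where w1': "w1 = e1 # w1'" "(p1, e1, p1') \<in> trans F1"
        "path (trans F1) p1' w1' q1"
      using dr w1 b by (cases w1) (auto simp: drains_def)
    show ?thesis
    proof (cases "is_send e1 \<or> xa \<noteq> []")
      case True
      have "drains Ma Mb xa xb (e # w0) (e1 # w1')" using dr w1'(1) by simp
      from drains_step1[OF fsm1 disj w1'(2) this True, of F0 p0]
      show ?thesis using w1' step by blast
    next
      case False
      then have "deadlocked F0 F1 ((p0, p1), (xa, xb))"
        using receive_state_if_not_send[OF sr0 w0] receive_state_if_not_send[OF sr1 w1'(2)] b
        by (simp add: deadlocked_def)
      then show ?thesis using df g by (simp add: deadlock_free_def)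
    qed
  qed
qed

lemma deadlock_free_run_prefix_reachable:
  assumes sp: "sr_pair Ma Mb F0 F1" and df: "deadlock_free F0 F1"
  shows "reachable F0 F1 ((p0, p1), (xa, xb)) \<Longrightarrow> path (trans F0) p0 (u @ v) q0 \<Longrightarrow>
    path (trans F1) p1 w1 q1 \<Longrightarrow> drains Ma Mb xa xb (u @ v) w1 \<Longrightarrow> path (trans F0) p0 u r \<Longrightarrow>
    \<exists>p1' xa' xb'. reachable F0 F1 ((r, p1'), (xa', xb'))"
proof (induction "length u + length w1" arbitrary: p0 p1 xa xb u w1 rule: less_induct)
  case less
  have sr0: "sr_machine Ma Mb F0" using sp by (simp add: sr_pair_def)
  show ?case
  proof (cases u)
    case Nil
    then show ?thesis using less.prems(1,5) by auto
  next
    case (Cons e u')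
    then obtain p0' where e: "(p0, e, p0') \<in> trans F0" and u': "path (trans F0) p0' u' r"
      using less.prems(5) by auto
    obtain p0'' where "(p0, e, p0'') \<in> trans F0" "path (trans F0) p0'' (u' @ v) q0"
      using less.prems(2) Cons by auto
    then have uv: "path (trans F0) p0' (u' @ v) q0"
      using sr_machine_step_deterministic[OF sr0 _ e] by blast
    have "drains Ma Mb xa xb (e # (u' @ v)) w1" using less.prems(4) Cons by simp
    from deadlock_free_progress[OF sp df less.prems(1) e less.prems(3) this] Cons
    consider xa' xb' where "reachable F0 F1 ((p0', p1), (xa', xb'))" "drains Ma Mb xa' xb' (u' @ v) w1"
      | e1 w1' p1' xa' xb' where "w1 = e1 # w1'" "path (trans F1) p1' w1' q1"
          "reachable F0 F1 ((p0, p1'), (xa', xb'))" "drains Ma Mb xa' xb' (u @ v) w1'"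
      by auto
    then show ?thesis
    proof cases
      case 1
      show ?thesis by (rule less.hyps[OF _ 1(1) uv less.prems(3) 1(2) u']) (simp add: Cons)
    next
      case 2
      show ?thesis
        by (rule less.hyps[OF _ 2(3) less.prems(2) 2(2) 2(4) less.prems(5)]) (simp add: 2(1))
    qed
  qed
qed

text \<open>Every local state of F0 lies on a cycle through the initial state; affinity supplies a
  matching cycle of F1, and running both from the initial global state visits the state.\<close>
lemma deadlock_free_affine_state_reachable:
  assumes sp: "sr_pair Ma Mb F0 F1" and af: "affine Ma Mb F0 F1" and df: "deadlock_free F0 F1"
    and p: "p \<in> states F0"
  shows "\<exists>p1 xa xb. reachable F0 F1 ((p, p1), (xa, xb))"
proof -
  have sr0: "sr_machine Ma Mb F0" using sp by (simp add: sr_pair_def)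
  then have "init F0 \<in> states F0" by (simp add: sr_machine_def is_fsm_def)
  then obtain x y where x: "path (trans F0) (init F0) x p" and y: "path (trans F0) p y (init F0)"
    using sr0 p unfolding sr_machine_def by blast
  then have xy: "path (trans F0) (init F0) (x @ y) (init F0)" by (auto simp: path_append_iff)
  then obtain z where z: "path (trans F1) (init F1) z (init F1)" and "drains Ma Mb [] [] (x @ y) z"
    using af by (auto simp: drains_def elim: affine_loop)
  moreover have "reachable F0 F1 ((init F0, init F1), ([], []))"
    by (simp add: reachable_def initial_gstate_def)
  ultimately show ?thesis
    using deadlock_free_run_prefix_reachable[OF sp df _ xy z _ x] by blast
qed

section \<open>Send cycles make a channel unbounded\<close>

lemma send_path_run:
  "path (trans F0) p w q \<Longrightarrow> \<forall>e \<in> set w. is_send e \<Longrightarrow>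
    (gstep F0 F1)\<^sup>*\<^sup>* ((p, p1), (xa, xb)) ((q, p1), (xa @ map msg w, xb))"
proof (induction arbitrary: xa rule: path.induct)
  case (path_cons p e r w q)
  then obtain b where e: "e = Send b" by (cases e) auto
  then have "gstep F0 F1 ((p, p1), (xa, xb)) ((r, p1), (xa @ [b], xb))"
    using path_cons.hyps(1) by (simp add: gstep.send0)
  moreover have "(gstep F0 F1)\<^sup>*\<^sup>* ((r, p1), (xa @ [b], xb)) ((q, p1), ((xa @ [b]) @ map msg w, xb))"
    using path_cons.prems by (intro path_cons.IH) simp
  ultimately show ?case using e by (simp add: converse_rtranclp_into_rtranclp)
qed simp

lemma send_cycle_imp_unbounded:
  assumes "sr_pair Ma Mb F0 F1" "affine Ma Mb F0 F1" "deadlock_free F0 F1" "has_send_cycle F0"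
  shows "\<not> bounded_channel F0 F1"
proof
  obtain p c where c: "c \<noteq> []" "path (trans F0) p c p" "\<forall>e \<in> set c. is_send e"
    using assms(4) unfolding has_send_cycle_iff has_cycle_within_def by blast
  have "is_fsm Ma Mb F0" using sr_pair_fsms[OF assms(1)] by simp
  then have "p \<in> states F0" using path_source_in_states[OF c(2) _ c(1)] by blast
  then obtain p1 xa xb where g: "reachable F0 F1 ((p, p1), (xa, xb))"
    using deadlock_free_affine_state_reachable[OF assms(1-3)] by blast
  have pump: "\<exists>xa'. reachable F0 F1 ((p, p1), (xa', xb)) \<and> n \<le> length xa'" for n
  proof (induction n)
    case (Suc n)
    then obtain xa' where "reachable F0 F1 ((p, p1), (xa', xb))" "n \<le> length xa'" by blast
    moreover have "reachable F0 F1 ((p, p1), (xa' @ map msg c, xb))"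
      using reachable_run[OF calculation(1) send_path_run[OF c(2,3)]] .
    moreover have "Suc n \<le> length (xa' @ map msg c)" using calculation(2) c(1) by (cases c) auto
    ultimately show ?case by blast
  qed (use g in blast)
  assume "bounded_channel F0 F1"
  then obtain B where B: "\<And>p xa xb. reachable F0 F1 (p, (xa, xb)) \<Longrightarrow> length xa + length xb \<le> B"
    unfolding bounded_channel_def by blast
  obtain xa' where "reachable F0 F1 ((p, p1), (xa', xb))" "Suc B \<le> length xa'"
    using pump by blast
  then show False using B by (meson add_leE not_less_eq_eq)
qed

section \<open>Without send cycles the channels stay bounded\<close>

text \<open>A receive cycle of F1 could be pumped into a cycle through the initial state that reads
  arbitrarily many messages while sending a fixed number; its affine counterpart in F0 would send
  arbitrarily many messages between boundedly many receptions, which needs a send cycle.\<close>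
lemma affine_no_send_cycle_imp_no_receive_cycle:
  assumes sp: "sr_pair Ma Mb F0 F1" and af: "affine Ma Mb F0 F1" and nsc: "\<not> has_send_cycle F0"
  shows "\<not> has_cycle_within (\<lambda>e. \<not> is_send e) F1"
proof
  assume "has_cycle_within (\<lambda>e. \<not> is_send e) F1"
  then obtain r v where v: "v \<noteq> []" "path (trans F1) r v r" "\<forall>e \<in> set v. \<not> is_send e"
    unfolding has_cycle_within_def by blast
  have sr0: "sr_machine Ma Mb F0" and sr1: "sr_machine Mb Ma F1" and disj: "Ma \<inter> Mb = {}"
    using sp by (auto simp: sr_pair_def)
  have fsm0: "is_fsm Ma Mb F0" and fsm1: "is_fsm Mb Ma F1"
    using sr0 sr1 by (simp_all add: sr_machine_is_fsm)
  have "r \<in> states F1" "init F1 \<in> states F1"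
    using path_source_in_states[OF v(2) fsm1 v(1)] fsm1 by (simp_all add: is_fsm_def)
  then obtain x y where x: "path (trans F1) (init F1) x r" and y: "path (trans F1) r y (init F1)"
    using sr1 unfolding sr_machine_def by blast
  define m where "m = length (proj Mb (x @ y))"
  define n where "n = card (states F0) * (m + 1) + 1"
  have "set v \<subseteq> alphabet Mb Ma" using path_labels_in_alphabet[OF v(2) fsm1] .
  moreover have "Mb \<inter> Ma = {}" using disj by blast
  ultimately have pv: "proj Mb v = []" "proj Ma v = map msg v"
    using v(3) by (simp_all add: proj_out_eq_sends proj_in_eq_receives filter_empty_conv)
  have "path (trans F1) (init F1) (x @ concat (replicate n v) @ y) (init F1)"
    using x y path_power[OF v(2)] by (auto simp: path_append_iff)
  moreover have "affine Ma Mb F1 F0" using af affine_commute by blast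
  ultimately obtain z where z: "path (trans F0) (init F0) z (init F0)"
    and za: "proj Ma z = proj Ma (x @ concat (replicate n v) @ y)"
    and zb: "proj Mb z = proj Mb (x @ concat (replicate n v) @ y)"
    using affine_loop by blast
  have "n \<le> n * length v" using v(1) by (cases v) auto
  also have "\<dots> \<le> length (proj Ma z)"
    using za by (simp add: proj_power pv length_concat sum_list_replicate)
  also have "\<dots> \<le> card (states F0) * (length (proj Mb z) + 1)"
    using no_send_cycle_count_bound[OF fsm0 disj nsc z] fsm0 by (simp add: is_fsm_def)
  also have "\<dots> < n"
    using zb by (simp add: proj_power pv m_def n_def)
  finally show False by simp
qed

text \<open>Complete the history of F0 to a cycle by v0 and take its affine counterpart z in F1.  By
  sr_machine_common_output_within_input, z emits what F0 has read before reading more than F1 has read, so the rest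
  d of z reads at least xa while sending at most what v0 reads; without receive cycles in F1 the
  count bound applies to d.\<close>
lemma history_unread_le:
  assumes sp: "sr_pair Ma Mb F0 F1" and af: "affine Ma Mb F0 F1"
    and nrc: "\<not> has_cycle_within (\<lambda>e. \<not> is_send e) F1"
    and u0: "path (trans F0) (init F0) u0 p0" and u1: "path (trans F1) (init F1) u1 p1"
    and hxa: "proj Ma u0 = proj Ma u1 @ xa" and hxb: "proj Mb u1 = proj Mb u0 @ xb"
    and v0: "path (trans F0) p0 v0 (init F0)"
  shows "length xa \<le> card (states F1) * (length v0 + 1)"
proof -
  have sr1: "sr_machine Mb Ma F1" and disj: "Mb \<inter> Ma = {}"
    using sp by (auto simp: sr_pair_def)
  have fsm1: "is_fsm Mb Ma F1" using sr1 by (rule sr_machine_is_fsm)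
  have "path (trans F0) (init F0) (u0 @ v0) (init F0)" using u0 v0 by (auto simp: path_append_iff)
  then obtain z where z: "path (trans F1) (init F1) z (init F1)"
    and za: "proj Ma z = proj Ma (u0 @ v0)" and zb: "proj Mb z = proj Mb (u0 @ v0)"
    using affine_loop[OF af] by blast
  have "prefix (proj Ma u1) (proj Ma z)" "prefix (proj Mb u0) (proj Mb u1)"
    "prefix (proj Mb u0) (proj Mb z)"
    using za zb hxa hxb by (auto intro: prefixI)
  then obtain c d where cd: "z = c @ d" "length (proj Ma c) \<le> length (proj Ma u1)"
    "length (proj Mb u0) \<le> length (proj Mb c)"
    using sr_machine_common_output_within_input[OF sr1 disj u1 z] by blast
  then obtain r where c: "path (trans F1) (init F1) c r" and d: "path (trans F1) r d (init F1)"
    using z by (auto simp: path_append_iff)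
  have "r \<in> states F1" using path_target_in_states[OF c fsm1] fsm1 by (simp add: is_fsm_def)
  then have "length (proj Ma d) \<le> card (states F1) * (length (proj Mb d) + 1)"
    using no_receive_cycle_count_bound[OF fsm1 disj nrc d] by blast
  moreover have "length xa \<le> length (proj Ma d)"
    using arg_cong[OF za, of length] hxa cd(1,2) by simp
  moreover have "length (proj Mb d) \<le> length v0"
    using arg_cong[OF zb, of length] cd(1,3) length_proj_le[of Mb v0] by simp
  ultimately show ?thesis by (meson add_le_mono1 le_trans mult_le_mono2)
qed

lemma no_send_cycle_alpha_bounded:
  assumes sp: "sr_pair Ma Mb F0 F1" and af: "affine Ma Mb F0 F1" and nsc: "\<not> has_send_cycle F0"
  obtains C where "\<And>p xa xb. reachable F0 F1 (p, (xa, xb)) \<Longrightarrow> length xa \<le> C"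
proof -
  have sr0: "sr_machine Ma Mb F0" using sp by (simp add: sr_pair_def)
  then have fsm0: "is_fsm Ma Mb F0" and h0: "init F0 \<in> states F0"
    by (simp_all add: sr_machine_is_fsm sr_machine_def is_fsm_def)
  have "finite (states F0)" using fsm0 by (simp add: is_fsm_def)
  moreover have "\<forall>p \<in> states F0. \<exists>w. path (trans F0) p w (init F0)"
    using sr0 h0 unfolding sr_machine_def by blast
  ultimately obtain N where N: "\<forall>p \<in> states F0. \<exists>v. path (trans F0) p v (init F0) \<and> length v \<le> N"
    by (rule bounded_paths_to)
  have nrc: "\<not> has_cycle_within (\<lambda>e. \<not> is_send e) F1"
    by (rule affine_no_send_cycle_imp_no_receive_cycle[OF sp af nsc])
  have "length xa \<le> card (states F1) * (N + 1)" if r: "reachable F0 F1 ((p0, p1), (xa, xb))"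
    for p0 p1 xa xb
  proof -
    obtain u0 u1 where u0: "path (trans F0) (init F0) u0 p0" and u1: "path (trans F1) (init F1) u1 p1"
      and hxa: "proj Ma u0 = proj Ma u1 @ xa" and hxb: "proj Mb u1 = proj Mb u0 @ xb"
      using reachable_histories[OF sp r] by blast
    have "p0 \<in> states F0" using path_target_in_states[OF u0 fsm0 h0] .
    then obtain v0 where v0: "path (trans F0) p0 v0 (init F0)" "length v0 \<le> N" using N by blast
    have "length xa \<le> card (states F1) * (length v0 + 1)"
      by (rule history_unread_le[OF sp af nrc u0 u1 hxa hxb v0(1)])
    also have "\<dots> \<le> card (states F1) * (N + 1)" using v0(2) by simp
    finally show ?thesis .
  qed
  then show ?thesis using that by (metis prod.collapse)
qed

lemma no_send_cycles_imp_bounded_channel: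
  assumes "sr_pair Ma Mb F0 F1" "affine Ma Mb F0 F1" "\<not> has_send_cycle F0" "\<not> has_send_cycle F1"
  shows "bounded_channel F0 F1"
proof -
  obtain Ca where Ca: "\<And>p xa xb. reachable F0 F1 (p, (xa, xb)) \<Longrightarrow> length xa \<le> Ca"
    using no_send_cycle_alpha_bounded[OF assms(1-3)] by blast
  have "sr_pair Mb Ma F1 F0" "affine Mb Ma F1 F0"
    using sr_pair_swap[THEN iffD2, OF assms(1)] affine_swap[THEN iffD2, OF assms(2)] .
  then obtain Cb where Cb: "\<And>p xb xa. reachable F1 F0 (p, (xb, xa)) \<Longrightarrow> length xb \<le> Cb"
    using no_send_cycle_alpha_bounded assms(4) by blast
  have "length xa + length xb \<le> Ca + Cb" if r: "reachable F0 F1 ((p0, p1), (xa, xb))" for p0 p1 xa xb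
  proof -
    have "reachable F1 F0 ((p1, p0), (xb, xa))" using reachable_swap[THEN iffD2, OF r] .
    then show ?thesis using Ca[OF r] Cb by (meson add_mono)
  qed
  then show ?thesis unfolding bounded_channel_def by (metis prod.collapse)
qed

theorem theorem6p3:
  fixes Ma Mb :: "'m set" and F0 :: "('s0, 'm) fsm" and F1 :: "('s1, 'm) fsm"
  assumes "sr_pair Ma Mb F0 F1"
    and "affine Ma Mb F0 F1"
    and "deadlock_free F0 F1"
  shows "bounded_channel F0 F1 \<longleftrightarrow> \<not> has_send_cycle F0 \<and> \<not> has_send_cycle F1"
proof
  assume "bounded_channel F0 F1"
  moreover have "bounded_channel F1 F0 \<Longrightarrow> \<not> has_send_cycle F1"
    using send_cycle_imp_unbounded sr_pair_swap[THEN iffD2, OF assms(1)]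
      affine_swap[THEN iffD2, OF assms(2)] deadlock_free_swap[THEN iffD2, OF assms(3)] by blast
  ultimately show "\<not> has_send_cycle F0 \<and> \<not> has_send_cycle F1"
    using send_cycle_imp_unbounded[OF assms] bounded_channel_swap_imp by blast
next
  assume "\<not> has_send_cycle F0 \<and> \<not> has_send_cycle F1"
  then show "bounded_channel F0 F1"
    using no_send_cycles_imp_bounded_channel[OF assms(1,2)] by blast
qed

end
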